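(* Let $A=\mathrm{diag}(G_1,\dots,G_m,[1])\in\mathbb{R}^{n\times n}$ (where the trailing block $[1]$ may or may not be present), with $G_j=\begin{bmatrix}c_j&s_j\\-s_j&c_j\end{bmatrix}$, $c_j^2+s_j^2=1$, $s_j\neq 0$, and $0<c_1<c_2<\cdots<c_m$. Let $v_0\in\mathbb{R}^n$ be a unit norm vector with $d(A,v_0)\geq 2$ and $v_0^{(1)}\neq 0$, run the iteration ACI($1$) below, and let $k_0$ and $\varrho\in(0,1)$ be such that $\|v_{k+1}^{(j)}\|\leq\varrho\|v_k^{(j)}\|$ for all $k\geq k_0$ and all blocks $j\geq 2$. Then for all $k\geq k_0$, $$\|v_{k+1}^{(1)}-v_k^{(1)}\|\leq\varrho^{\,k-k_0}.$$
   Context: Block partitioning: every $v\in\mathbb{R}^n$ is written as $v=[v^{(1)};\dots;v^{(m)};v^{(m+1)}]$ with $v^{(j)}\in\mathbb{R}^2$ for $j=1,\dots,m$ (conforming with the blocks $G_j$) and $v^{(m+1)}\in\mathbb{R}$ (present only if the block $[1]$ is present). ACI($1$): for $k=0,1,2,\dots$: $\widetilde w_k=(A-\alpha_kI)v_k$ with $\alpha_k=v_k^TAv_k$; $w_k=\widetilde w_k/\|\widetilde w_k\|$; $\widetilde v_{k+1}=(A^T-\beta_kI)w_k$ with $\beta_k=w_k^TAw_k$; $v_{k+1}=\widetilde v_{k+1}/\|\widetilde v_{k+1}\|$. $d(A,v)$ is the grade of $v$ w.r.t. $A$ (degree of the monic polynomial $p$ of smallest degree with $p(A)v=0$); $\|\cdot\|$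 is the Euclidean norm. (The paper states this with the normalization $k_0=0$, giving $\|v_{k+1}^{(1)}-v_k^{(1)}\|\leq\varrho^k$.) *)

theory Defs
  imports Complex_Main "HOL-Computational_Algebra.Polynomial"
begin

text \<open>Vectors in R^n are represented as functions nat => real, components 0..n-1
  (0-based); matrices as nat => nat => real with row/column indices below n.
  Block j (1-based, 1 <= j <= m) of a vector consists of components 2j-2, 2j-1;
  the trailing scalar block (index m+1, present iff t) is component 2m.\<close>

definition dimn :: "nat \<Rightarrow> bool \<Rightarrow> nat" where
  "dimn m t = 2 * m + (if t then 1 else 0)"

text \<open>A = diag(G_1,...,G_m,[1]) with G_j = [[c_j, s_j], [-s_j, c_j]].\<close>
definition Amat :: "(nat \<Rightarrow> real) \<Rightarrow> (nat \<Rightarrow> real) \<Rightarrow> nat \<Rightarrow> bool \<Rightarrow> nat \<Rightarrow> nat \<Rightarrow> real" where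
  "Amat c s m t i j =
    (if i < 2 * m \<and> j < 2 * m \<and> i div 2 = j div 2 then
       (if even i \<and> even j then c (i div 2 + 1)
        else if even i \<and> odd j then s (i div 2 + 1)
        else if odd i \<and> even j then - s (i div 2 + 1)
        else c (i div 2 + 1))
     else if t \<and> i = 2 * m \<and> j = 2 * m then 1 else 0)"

definition transp :: "(nat \<Rightarrow> nat \<Rightarrow> real) \<Rightarrow> nat \<Rightarrow> nat \<Rightarrow> real" where
  "transp M i j = M j i"

definition matvec :: "nat \<Rightarrow> (nat \<Rightarrow> nat \<Rightarrow> real) \<Rightarrow> (nat \<Rightarrow> real) \<Rightarrow> nat \<Rightarrow> real" where
  "matvec n M v i = (if i < n then (\<Sum>j<n. M i j * v j) else 0)"

definition inner_n :: "nat \<Rightarrow> (nat \<Rightarrow> real) \<Rightarrow> (nat \<Rightarrow> real) \<Rightarrow> real" where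
  "inner_n n u v = (\<Sum>i<n. u i * v i)"

definition norm_n :: "nat \<Rightarrow> (nat \<Rightarrow> real) \<Rightarrow> real" where
  "norm_n n v = sqrt (inner_n n v v)"

definition normalize_n :: "nat \<Rightarrow> (nat \<Rightarrow> real) \<Rightarrow> nat \<Rightarrow> real" where
  "normalize_n n v i = (if i < n then v i / norm_n n v else 0)"

definition polyapp :: "nat \<Rightarrow> (nat \<Rightarrow> nat \<Rightarrow> real) \<Rightarrow> real poly \<Rightarrow> (nat \<Rightarrow> real) \<Rightarrow> nat \<Rightarrow> real" where
  "polyapp n M p v i = (\<Sum>k\<le>degree p. coeff p k * ((matvec n M ^^ k) v) i)"

definition grade :: "nat \<Rightarrow> (nat \<Rightarrow> nat \<Rightarrow> real) \<Rightarrow> (nat \<Rightarrow> real) \<Rightarrow> nat" where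
  "grade n M v = (LEAST d. \<exists>p. lead_coeff p = 1 \<and> degree p = d \<and>
                      (\<forall>i<n. polyapp n M p v i = 0))"

fun aci_v :: "nat \<Rightarrow> (nat \<Rightarrow> nat \<Rightarrow> real) \<Rightarrow> (nat \<Rightarrow> real) \<Rightarrow> nat \<Rightarrow> nat \<Rightarrow> real"
and aci_w :: "nat \<Rightarrow> (nat \<Rightarrow> nat \<Rightarrow> real) \<Rightarrow> (nat \<Rightarrow> real) \<Rightarrow> nat \<Rightarrow> nat \<Rightarrow> real" where
  "aci_v n M v0 0 = v0"
| "aci_w n M v0 k =
     (let v = aci_v n M v0 k;
          \<alpha> = inner_n n v (matvec n M v)
      in normalize_n n (\<lambda>i. matvec n M v i - \<alpha> * v i))"
| "aci_v n M v0 (Suc k) =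
     (let w = aci_w n M v0 k;
          \<beta> = inner_n n w (matvec n M w)
      in normalize_n n (\<lambda>i. matvec n (transp M) w i - \<beta> * w i))"

definition blknorm :: "nat \<Rightarrow> (nat \<Rightarrow> real) \<Rightarrow> nat \<Rightarrow> real" where
  "blknorm m v j = (if j \<le> m then sqrt ((v (2*j-2))\<^sup>2 + (v (2*j-1))\<^sup>2)
                    else \<bar>v (2*m)\<bar>)"

end

theory Submission
  imports Defs
begin

text \<open>Both half steps of ACI(1) act blockwise, multiplying the energy of each block by the
  squared distance between its eigenvalues and the current shift. On the first block, one step
  therefore maps v_k^(1) to (a I + b J) v_k^(1) / K, a scaled rotation. Since c_1 is the smallest
  cosine, both shifts alpha_k, beta_k exceed c_1 by at most (1 - c_1) x, where x is the energy of
  v_k outside the first block; this gives b^2 \<le> x a^2, and an elementary inequality then yields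
  \<parallel>v_(k+1)^(1) - v_k^(1)\<parallel>^2 \<le> x. By hypothesis, x decays like \<rho>^(2(k - k0)).\<close>

lemma quadratic_nonpos_between:
  fixes A B C K K1 K2 :: real
  assumes "0 \<le> A" "K1 \<le> K" "K \<le> K2"
    and "A * K1\<^sup>2 + B * K1 + C \<le> 0" "A * K2\<^sup>2 + B * K2 + C \<le> 0"
  shows "A * K\<^sup>2 + B * K + C \<le> 0"
proof (cases "K1 = K2")
  case True
  with assms show ?thesis by simp
next
  case False
  define g where "g x = A * x\<^sup>2 + B * x + C" for x
  have interp: "(K2 - K1) * g K = (K2 - K) * g K1 + (K - K1) * g K2 + A * (K - K1) * (K - K2) * (K2 - K1)"
    unfolding g_def by (simp add: algebra_simps power2_eq_square)
  have "(K2 - K) * g K1 \<le> 0" "(K - K1) * g K2 \<le> 0"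
    using assms by (auto simp: g_def mult_nonneg_nonpos)
  moreover have "A * (K - K1) * (K - K2) * (K2 - K1) \<le> 0"
    using assms by (simp add: mult_nonneg_nonpos mult_nonpos_nonneg)
  ultimately have "(K2 - K1) * g K \<le> 0" unfolding interp by linarith
  moreover have "0 < K2 - K1" using False assms by linarith
  ultimately show ?thesis unfolding g_def by (simp add: mult_le_0_iff)
qed

lemma rotation_defect_core:
  fixes p a b K :: real
  assumes p: "0 < p" "p \<le> 1" and a: "0 < a" and K: "0 \<le> K"
    and K_lo: "p * (a\<^sup>2 + b\<^sup>2) \<le> K\<^sup>2" and K_hi: "K\<^sup>2 \<le> a\<^sup>2 + b\<^sup>2"
    and b: "b\<^sup>2 \<le> (1 - p) * a\<^sup>2"
  shows "p * (a\<^sup>2 + b\<^sup>2) + (2 * p - 1) * K\<^sup>2 \<le> 2 * p * a * K"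
proof -
  define Q where "Q = a\<^sup>2 + b\<^sup>2"
  have "p * b\<^sup>2 \<le> b\<^sup>2" using p by (simp add: mult_left_le_one_le)
  hence pQ_le: "p * Q \<le> a\<^sup>2" using b unfolding Q_def by (simp add: algebra_simps)
  have Q_le: "Q \<le> (2 - p) * a\<^sup>2" using b unfolding Q_def by (simp add: algebra_simps)
  have Q_pos: "0 < Q" using a unfolding Q_def by (simp add: add_pos_nonneg)
  have sqrt_pQ_le: "sqrt (p * Q) \<le> a" "sqrt (p * Q) \<le> K"
    using pQ_le K_lo a K p Q_pos unfolding Q_def by (auto intro: real_le_lsqrt)
  show ?thesis
  proof (cases "p \<le> 1/2")
    case True
    have "p * Q = sqrt (p * Q) * sqrt (p * Q)" using p Q_pos by simp
    also have "\<dots> \<le> a * K" using sqrt_pQ_le p a Q_pos by (intro mult_mono) auto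
    finally have "p * Q \<le> a * K" .
    moreover have "(2 * p - 1) * K\<^sup>2 \<le> (2 * p - 1) * (p * Q)"
      using True K_lo unfolding Q_def by (intro mult_left_mono_neg) auto
    moreover have "2 * p * (p * Q) \<le> 2 * p * (a * K)"
      using calculation(1) p by (intro mult_left_mono) auto
    ultimately have "p * Q + (2 * p - 1) * K\<^sup>2 \<le> 2 * p * (a * K)"
      by (simp add: algebra_simps)
    then show ?thesis unfolding Q_def by (simp add: mult.assoc)
  next
    case False
    text \<open>Now the difference of the two sides is a convex quadratic in K, so it suffices to
      check the extreme values K = sqrt (p Q) and K = sqrt Q.\<close>
    have A: "0 \<le> 2 * p - 1" using False by simp
    have at_lo: "(2 * p - 1) * (sqrt (p * Q))\<^sup>2 + (- 2 * p * a) * sqrt (p * Q) + p * Q \<le> 0"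
    proof -
      have "(2 * p - 1) * (sqrt (p * Q))\<^sup>2 + (- 2 * p * a) * sqrt (p * Q) + p * Q
          = 2 * p * sqrt (p * Q) * (sqrt (p * Q) - a)"
        using p Q_pos by (simp add: algebra_simps power2_eq_square)
      also have "\<dots> \<le> 0" by (intro mult_nonneg_nonpos) (use sqrt_pQ_le p Q_pos in auto)
      finally show ?thesis .
    qed
    have "(3 * p - 1) * sqrt Q \<le> 2 * p * a"
    proof (rule power2_le_imp_le)
      have "4 * p\<^sup>2 - (3 * p - 1)\<^sup>2 * (2 - p) = (1 - p)\<^sup>2 * (9 * p - 2)"
        by (simp add: algebra_simps power2_eq_square)
      also have "\<dots> \<ge> 0" using False by simp
      finally have "(3 * p - 1)\<^sup>2 * (2 - p) \<le> (2 * p)\<^sup>2" by (simp add: power_mult_distrib)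
      hence "(3 * p - 1)\<^sup>2 * (2 - p) * a\<^sup>2 \<le> (2 * p)\<^sup>2 * a\<^sup>2" by (rule mult_right_mono) simp
      hence "(3 * p - 1)\<^sup>2 * ((2 - p) * a\<^sup>2) \<le> (2 * p * a)\<^sup>2"
        by (simp only: power_mult_distrib mult.assoc)
      moreover have "(3 * p - 1)\<^sup>2 * Q \<le> (3 * p - 1)\<^sup>2 * ((2 - p) * a\<^sup>2)"
        using Q_le by (simp add: mult_left_mono)
      ultimately show "((3 * p - 1) * sqrt Q)\<^sup>2 \<le> (2 * p * a)\<^sup>2"
        using Q_pos by (simp add: power_mult_distrib)
    qed (use p a in auto)
    hence "sqrt Q * ((3 * p - 1) * sqrt Q - 2 * p * a) \<le> 0"
      using Q_pos by (intro mult_nonneg_nonpos) auto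
    moreover have "(2 * p - 1) * (sqrt Q)\<^sup>2 + (- 2 * p * a) * sqrt Q + p * Q
        = sqrt Q * ((3 * p - 1) * sqrt Q - 2 * p * a)"
      using Q_pos by (simp add: algebra_simps)
    ultimately have at_hi: "(2 * p - 1) * (sqrt Q)\<^sup>2 + (- 2 * p * a) * sqrt Q + p * Q \<le> 0"
      by simp
    have "K \<le> sqrt Q" using K_hi unfolding Q_def by (rule real_le_rsqrt)
    with quadratic_nonpos_between[OF A sqrt_pQ_le(2) this at_lo at_hi]
    show ?thesis unfolding Q_def by (simp add: algebra_simps)
  qed
qed

text \<open>If w = (a I + b J) v / K with J the rotation by a right angle and \<parallel>v\<parallel>^2 = p, then
  \<parallel>w - v\<parallel>^2 = p ((a/K - 1)^2 + (b/K)^2).\<close>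

lemma scaled_rotation_defect_le:
  fixes p a b K T :: real
  assumes p: "0 < p" "p \<le> 1" and a: "0 < a" and K: "0 < K"
    and K_sq: "K\<^sup>2 = p * (a\<^sup>2 + b\<^sup>2) + T" and T: "0 \<le> T" "T \<le> (a\<^sup>2 + b\<^sup>2) * (1 - p)"
    and b: "b\<^sup>2 \<le> (1 - p) * a\<^sup>2"
  shows "p * ((a / K - 1)\<^sup>2 + (b / K)\<^sup>2) \<le> 1 - p"
proof -
  have "p * (a\<^sup>2 + b\<^sup>2) + (2 * p - 1) * K\<^sup>2 \<le> 2 * p * a * K"
    by (rule rotation_defect_core[OF p a less_imp_le[OF K]]) (use K_sq T b in \<open>auto simp: algebra_simps\<close>)
  hence "p * (a\<^sup>2 + b\<^sup>2 - 2 * a * K + K\<^sup>2) \<le> (1 - p) * K\<^sup>2"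
    by (simp add: algebra_simps)
  moreover have "p * ((a / K - 1)\<^sup>2 + (b / K)\<^sup>2) = p * (a\<^sup>2 + b\<^sup>2 - 2 * a * K + K\<^sup>2) / K\<^sup>2"
    using K by (simp add: field_simps power2_eq_square)
  ultimately show ?thesis using K by (simp add: divide_le_eq)
qed

lemma rotation_coeff_bounds:
  fixes C S \<alpha> \<beta> x :: real
  assumes CS: "C\<^sup>2 + S\<^sup>2 = 1" and C: "0 < C" and x: "0 \<le> x" "x \<le> 1"
    and \<alpha>: "C \<le> \<alpha>" "\<alpha> - C \<le> (1 - C) * x"
    and \<beta>: "C \<le> \<beta>" "\<beta> - C \<le> (1 - C) * x"
  shows "S\<^sup>2 \<le> (C - \<alpha>) * (C - \<beta>) + S\<^sup>2"
    and "(S * (\<alpha> - \<beta>))\<^sup>2 \<le> x * ((C - \<alpha>) * (C - \<beta>) + S\<^sup>2)\<^sup>2"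
proof -
  define a where "a = (C - \<alpha>) * (C - \<beta>) + S\<^sup>2"
  have "0 \<le> (\<alpha> - C) * (\<beta> - C)" using \<alpha> \<beta> by simp
  then show a_ge: "S\<^sup>2 \<le> (C - \<alpha>) * (C - \<beta>) + S\<^sup>2" by (simp add: algebra_simps)
  have "C\<^sup>2 \<le> 1" using CS zero_le_power2[of S] by linarith
  hence C_le: "C \<le> 1" by (simp add: abs_square_le_1)
  have "\<bar>\<alpha> - \<beta>\<bar> \<le> (1 - C) * x" using \<alpha> \<beta> by linarith
  hence "(\<alpha> - \<beta>)\<^sup>2 \<le> ((1 - C) * x)\<^sup>2" by (simp add: abs_le_square_iff[symmetric])
  also have "\<dots> = (1 - C)\<^sup>2 * (x * x)" by (simp add: power2_eq_square)
  also have "\<dots> \<le> (1 - C)\<^sup>2 * x"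
    by (rule mult_left_mono) (use x mult_right_le_one_le[of x x] in auto)
  also have "\<dots> \<le> ((1 - C) * (1 + C)) * x"
  proof (rule mult_right_mono)
    show "(1 - C)\<^sup>2 \<le> (1 - C) * (1 + C)"
      unfolding power2_eq_square using C C_le by (intro mult_left_mono) auto
  qed (use x in auto)
  also have "(1 - C) * (1 + C) = S\<^sup>2" using CS by (simp add: algebra_simps power2_eq_square)
  finally have diff_sq: "(\<alpha> - \<beta>)\<^sup>2 \<le> S\<^sup>2 * x" .
  have "(S * (\<alpha> - \<beta>))\<^sup>2 = S\<^sup>2 * (\<alpha> - \<beta>)\<^sup>2" by (simp add: power_mult_distrib)
  also have "\<dots> \<le> S\<^sup>2 * (S\<^sup>2 * x)" by (rule mult_left_mono[OF diff_sq]) simp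
  also have "\<dots> = x * (S\<^sup>2 * S\<^sup>2)" by simp
  also have "\<dots> \<le> x * (a * a)"
    using a_ge x unfolding a_def by (intro mult_left_mono mult_mono) auto
  finally show "(S * (\<alpha> - \<beta>))\<^sup>2 \<le> x * ((C - \<alpha>) * (C - \<beta>) + S\<^sup>2)\<^sup>2"
    unfolding a_def by (simp add: power2_eq_square)
qed

text \<open>Block indices are 0-based: index k < m is the paper's block k+1, and index m is the
  trailing block [1], present iff t.\<close>

definition blocksum :: "nat \<Rightarrow> bool \<Rightarrow> (nat \<Rightarrow> real) \<Rightarrow> real" where
  "blocksum m t F = (\<Sum>k<m. F k) + (if t then F m else 0)"

definition blocksum_tail :: "nat \<Rightarrow> bool \<Rightarrow> (nat \<Rightarrow> real) \<Rightarrow> real" where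
  "blocksum_tail m t F = (\<Sum>k\<in>{1..<m}. F k) + (if t then F m else 0)"

lemma blocksum_split: "1 \<le> m \<Longrightarrow> blocksum m t F = F 0 + blocksum_tail m t F"
  unfolding blocksum_def blocksum_tail_def
  by (simp add: lessThan_atLeast0 sum.atLeast_Suc_lessThan)

lemma sum_lessThan_double:
  fixes g :: "nat \<Rightarrow> real"
  shows "(\<Sum>i<2 * m. g i) = (\<Sum>k<m. g (2 * k) + g (2 * k + 1))"
  by (induction m) (auto simp: sum.lessThan_Suc)

lemma sum_dimn_blocksum:
  "(\<Sum>i<dimn m t. g i) = blocksum m t (\<lambda>k. if k < m then g (2 * k) + g (2 * k + 1) else g (2 * m))"
  unfolding blocksum_def dimn_def by (auto simp: sum_lessThan_double)

lemma blocksum_cong: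
  "(\<And>k. k < m \<or> (t \<and> k = m) \<Longrightarrow> F k = G k) \<Longrightarrow> blocksum m t F = blocksum m t G"
  unfolding blocksum_def by (auto intro!: sum.cong)

lemma blocksum_tail_cong:
  "1 \<le> m \<Longrightarrow> (\<And>k. 1 \<le> k \<Longrightarrow> k < m \<or> (t \<and> k = m) \<Longrightarrow> F k = G k) \<Longrightarrow>
    blocksum_tail m t F = blocksum_tail m t G"
  unfolding blocksum_tail_def by (auto intro!: sum.cong)

lemma blocksum_tail_mono:
  "1 \<le> m \<Longrightarrow> (\<And>k. 1 \<le> k \<Longrightarrow> k < m \<or> (t \<and> k = m) \<Longrightarrow> F k \<le> G k) \<Longrightarrow>
    blocksum_tail m t F \<le> blocksum_tail m t G"
  unfolding blocksum_tail_def by (auto intro!: add_mono sum_mono)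

lemma blocksum_tail_nonneg:
  "1 \<le> m \<Longrightarrow> (\<And>k. 1 \<le> k \<Longrightarrow> k < m \<or> (t \<and> k = m) \<Longrightarrow> 0 \<le> F k) \<Longrightarrow>
    0 \<le> blocksum_tail m t F"
  using blocksum_tail_mono[where F="\<lambda>_. 0" and G=F] by (simp add: blocksum_tail_def)

lemma blocksum_mult: "blocksum m t (\<lambda>k. a * F k) = a * blocksum m t F"
  unfolding blocksum_def by (simp add: sum_distrib_left distrib_left)

lemma blocksum_tail_mult: "blocksum_tail m t (\<lambda>k. a * F k) = a * blocksum_tail m t F"
  unfolding blocksum_tail_def by (simp add: sum_distrib_left distrib_left)

lemma blocksum_divide: "blocksum m t (\<lambda>k. F k / a) = blocksum m t F / a"
  unfolding blocksum_def by (simp add: sum_divide_distrib add_divide_distrib)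

lemma blocksum_tail_divide: "blocksum_tail m t (\<lambda>k. F k / a) = blocksum_tail m t F / a"
  unfolding blocksum_tail_def by (simp add: sum_divide_distrib add_divide_distrib)

lemma blocksum_diff: "blocksum m t (\<lambda>k. F k - G k) = blocksum m t F - blocksum m t G"
  unfolding blocksum_def by (simp add: sum_subtractf)

lemma sum_indicator_mult: "i < (n::nat) \<Longrightarrow> (\<Sum>j<n. (if j = i then x else 0) * v j) = (x::real) * v i"
proof -
  assume i: "i < n"
  have "(\<Sum>j<n. (if j = i then x else 0) * v j) = (\<Sum>j<n. if j = i then x * v i else 0)"
    by (rule sum.cong) auto
  also have "\<dots> = x * v i" using i by simp
  finally show ?thesis .
qed

lemma sum_two_indicators_mult:
  "i < (n::nat) \<Longrightarrow> i' < n \<Longrightarrow>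
    (\<Sum>j<n. ((if j = i then x else 0) + (if j = i' then y else 0)) * v j) = (x::real) * v i + y * v i'"
  by (simp only: distrib_right sum.distrib sum_indicator_mult)

lemma Amat_row_even:
  "k < m \<Longrightarrow> Amat c s m t (2 * k) j =
    (if j = 2 * k then c (Suc k) else 0) + (if j = 2 * k + 1 then s (Suc k) else 0)"
  unfolding Amat_def by auto

lemma Amat_row_odd:
  "k < m \<Longrightarrow> Amat c s m t (2 * k + 1) j =
    (if j = 2 * k then - s (Suc k) else 0) + (if j = 2 * k + 1 then c (Suc k) else 0)"
  unfolding Amat_def by auto

lemma Amat_row_last: "t \<Longrightarrow> Amat c s m t (2 * m) j = (if j = 2 * m then 1 else 0)"
  unfolding Amat_def by auto

lemma Amat_col_even:
  "k < m \<Longrightarrow> Amat c s m t j (2 * k) =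
    (if j = 2 * k then c (Suc k) else 0) + (if j = 2 * k + 1 then - s (Suc k) else 0)"
  unfolding Amat_def by auto

lemma Amat_col_odd:
  "k < m \<Longrightarrow> Amat c s m t j (2 * k + 1) =
    (if j = 2 * k then s (Suc k) else 0) + (if j = 2 * k + 1 then c (Suc k) else 0)"
  unfolding Amat_def by auto

lemma Amat_col_last: "t \<Longrightarrow> Amat c s m t j (2 * m) = (if j = 2 * m then 1 else 0)"
  unfolding Amat_def by auto

lemma dimn_block_idx: "k < m \<Longrightarrow> 2 * k < dimn m t \<and> 2 * k + 1 < dimn m t"
  by (auto simp: dimn_def)

lemma dimn_last_idx: "t \<Longrightarrow> 2 * m < dimn m t"
  by (auto simp: dimn_def)

lemma matvec_Amat_even:
  assumes "k < m"
  shows "matvec (dimn m t) (Amat c s m t) v (2 * k) = c (Suc k) * v (2 * k) + s (Suc k) * v (2 * k + 1)"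
  using dimn_block_idx[OF assms, of t] unfolding matvec_def
  by (simp only: if_True Amat_row_even[OF assms] sum_two_indicators_mult)

lemma matvec_Amat_odd:
  assumes "k < m"
  shows "matvec (dimn m t) (Amat c s m t) v (2 * k + 1) = - s (Suc k) * v (2 * k) + c (Suc k) * v (2 * k + 1)"
  using dimn_block_idx[OF assms, of t] unfolding matvec_def
  by (simp only: if_True Amat_row_odd[OF assms] sum_two_indicators_mult)

lemma matvec_Amat_last:
  assumes "t" shows "matvec (dimn m t) (Amat c s m t) v (2 * m) = v (2 * m)"
  using dimn_last_idx[OF assms, of m] unfolding matvec_def
  by (simp only: if_True Amat_row_last[OF assms] sum_indicator_mult mult_1)

lemma matvec_transp_Amat_even:
  assumes "k < m"
  shows "matvec (dimn m t) (transp (Amat c s m t)) v (2 * k) = c (Suc k) * v (2 * k) - s (Suc k) * v (2 * k + 1)"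
  using dimn_block_idx[OF assms, of t] unfolding matvec_def transp_def
  by (simp only: if_True Amat_col_even[OF assms] sum_two_indicators_mult)

lemma matvec_transp_Amat_odd:
  assumes "k < m"
  shows "matvec (dimn m t) (transp (Amat c s m t)) v (2 * k + 1) = s (Suc k) * v (2 * k) + c (Suc k) * v (2 * k + 1)"
  using dimn_block_idx[OF assms, of t] unfolding matvec_def transp_def
  by (simp only: if_True Amat_col_odd[OF assms] sum_two_indicators_mult)

lemma matvec_transp_Amat_last:
  assumes "t" shows "matvec (dimn m t) (transp (Amat c s m t)) v (2 * m) = v (2 * m)"
  using dimn_last_idx[OF assms, of m] unfolding matvec_def transp_def
  by (simp only: if_True Amat_col_last[OF assms] sum_indicator_mult mult_1)

locale rotation_blocks =
  fixes m :: nat and t :: bool and c s :: "nat \<Rightarrow> real"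
  assumes m1: "m \<ge> 1"
    and cs: "\<forall>j\<in>{1..m}. (c j)\<^sup>2 + (s j)\<^sup>2 = 1 \<and> s j \<noteq> 0"
    and c1: "0 < c 1"
    and cmono: "\<forall>j\<in>{1..<m}. c j < c (Suc j)"
begin

abbreviation "n \<equiv> dimn m t"
abbreviation "M \<equiv> Amat c s m t"
abbreviation "is_block k \<equiv> k < m \<or> (t \<and> k = m)"

text \<open>The trailing block [1] is treated as a rotation with cosine 1 and sine 0.\<close>

definition cos_blk :: "nat \<Rightarrow> real" where
  "cos_blk k = (if k < m then c (Suc k) else 1)"

definition sin_blk :: "nat \<Rightarrow> real" where
  "sin_blk k = (if k < m then s (Suc k) else 0)"

definition energy :: "(nat \<Rightarrow> real) \<Rightarrow> nat \<Rightarrow> real" where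
  "energy v k = (if k < m then (v (2 * k))\<^sup>2 + (v (2 * k + 1))\<^sup>2 else (v (2 * m))\<^sup>2)"

text \<open>gain a k is the squared distance from a to the eigenvalues cos_blk k \<plusminus> i sin_blk k.\<close>

definition gain :: "real \<Rightarrow> nat \<Rightarrow> real" where
  "gain a k = (cos_blk k - a)\<^sup>2 + (sin_blk k)\<^sup>2"

lemma m_pos: "0 < m"
  using m1 by simp

lemma energy_nonneg: "0 \<le> energy v k"
  unfolding energy_def by auto

lemma blknorm_eq_sqrt_energy: "is_block k \<Longrightarrow> blknorm m v (Suc k) = sqrt (energy v k)"
  unfolding blknorm_def energy_def by (cases "k < m") (auto simp: numeral_2_eq_2)

lemma cos_sin_blk_sq: "is_block k \<Longrightarrow> (cos_blk k)\<^sup>2 + (sin_blk k)\<^sup>2 = 1"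
  using cs unfolding cos_blk_def sin_blk_def by auto

lemma cos_blk_0: "cos_blk 0 = c 1"
  using m1 unfolding cos_blk_def by auto

lemma sin_blk_0: "sin_blk 0 = s 1"
  using m1 unfolding sin_blk_def by auto

lemma sin_blk_0_nonzero: "sin_blk 0 \<noteq> 0"
  using m1 cs unfolding sin_blk_def by auto

lemma cos_blk_0_pos: "0 < cos_blk 0"
  using cos_blk_0 c1 by simp

lemma cos_blk_le_1: "is_block k \<Longrightarrow> cos_blk k \<le> 1"
proof -
  assume "is_block k"
  hence "(cos_blk k)\<^sup>2 \<le> 1" using cos_sin_blk_sq[of k] zero_le_power2[of "sin_blk k"] by linarith
  thus ?thesis by (simp add: abs_square_le_1)
qed

lemma c_1_le: "k < m \<Longrightarrow> c 1 \<le> c (Suc k)"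
proof (induction k)
  case (Suc k)
  then have "c (Suc k) < c (Suc (Suc k))" using cmono by auto
  with Suc show ?case by auto
qed simp

lemma cos_blk_0_le: "is_block k \<Longrightarrow> cos_blk 0 \<le> cos_blk k"
  using c_1_le cos_blk_le_1[of 0] m_pos unfolding cos_blk_0 by (auto simp: cos_blk_def)

lemma gain_eq: "is_block k \<Longrightarrow> gain a k = 1 - 2 * a * cos_blk k + a\<^sup>2"
  using cos_sin_blk_sq[of k] unfolding gain_def by (simp add: power2_eq_square algebra_simps)

lemma gain_nonneg: "0 \<le> gain a k"
  unfolding gain_def by simp

lemma gain_0_pos: "0 < gain a 0"
  using sin_blk_0_nonzero zero_le_power2[of "cos_blk 0 - a"] unfolding gain_def
  by (simp add: add_nonneg_pos)

lemma gain_le_gain_0: "is_block k \<Longrightarrow> 0 \<le> a \<Longrightarrow> gain a k \<le> gain a 0"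
  using gain_eq[of k a] gain_eq[of 0 a] m_pos mult_left_mono[OF cos_blk_0_le, of k a] by simp

lemma inner_n_blocks:
  "inner_n n u v = blocksum m t (\<lambda>k. if k < m then u (2 * k) * v (2 * k) + u (2 * k + 1) * v (2 * k + 1)
                                    else u (2 * m) * v (2 * m))"
  unfolding inner_n_def by (rule sum_dimn_blocksum)

lemma norm_n_nonneg: "0 \<le> norm_n n u"
  unfolding norm_n_def inner_n_def by (simp add: sum_nonneg)

lemma norm_n_sq: "(norm_n n u)\<^sup>2 = blocksum m t (energy u)"
proof -
  have "inner_n n u u = blocksum m t (energy u)"
    unfolding inner_n_blocks by (rule blocksum_cong) (auto simp: energy_def power2_eq_square)
  moreover have "0 \<le> inner_n n u u"
    unfolding inner_n_def by (simp add: sum_nonneg)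
  ultimately show ?thesis unfolding norm_n_def by simp
qed

lemma rayleigh_eq: "inner_n n v (matvec n M v) = blocksum m t (\<lambda>k. cos_blk k * energy v k)"
  unfolding inner_n_blocks
proof (rule blocksum_cong)
  fix k assume k: "is_block k"
  show "(if k < m then v (2 * k) * matvec n M v (2 * k) + v (2 * k + 1) * matvec n M v (2 * k + 1)
        else v (2 * m) * matvec n M v (2 * m)) = cos_blk k * energy v k"
  proof (cases "k < m")
    case True
    then show ?thesis
      by (simp only: matvec_Amat_even[OF True] matvec_Amat_odd[OF True] if_True)
        (simp add: cos_blk_def energy_def power2_eq_square algebra_simps)
  next
    case False
    with k have "t" "k = m" by auto
    then show ?thesis by (simp add: matvec_Amat_last cos_blk_def energy_def power2_eq_square)
  qed
qed

lemma energy_shift: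
  assumes k: "is_block k"
  shows "energy (\<lambda>i. matvec n M v i - a * v i) k = gain a k * energy v k"
proof (cases "k < m")
  case True
  then show ?thesis
    by (simp only: energy_def if_True matvec_Amat_even[OF True] matvec_Amat_odd[OF True])
      (simp add: gain_def cos_blk_def sin_blk_def energy_def power2_eq_square algebra_simps)
next
  case False
  with k have t: "t" by auto
  show ?thesis
    by (simp only: energy_def False matvec_Amat_last[OF t] if_False)
      (simp add: False gain_def cos_blk_def sin_blk_def power2_eq_square algebra_simps)
qed

lemma energy_shift_transp:
  assumes k: "is_block k"
  shows "energy (\<lambda>i. matvec n (transp M) v i - a * v i) k = gain a k * energy v k"
proof (cases "k < m")
  case True
  then show ?thesis
    by (simp only: energy_def if_True matvec_transp_Amat_even[OF True] matvec_transp_Amat_odd[OF True])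
      (simp add: gain_def cos_blk_def sin_blk_def energy_def power2_eq_square algebra_simps)
next
  case False
  with k have t: "t" by auto
  show ?thesis
    by (simp only: energy_def False matvec_transp_Amat_last[OF t] if_False)
      (simp add: False gain_def cos_blk_def sin_blk_def power2_eq_square algebra_simps)
qed

lemma energy_normalize: "is_block k \<Longrightarrow> energy (normalize_n n u) k = energy u k / (norm_n n u)\<^sup>2"
  using dimn_block_idx[of k m t] dimn_last_idx[of t m]
  by (cases "k < m") (auto simp: energy_def normalize_n_def power_divide add_divide_distrib)

lemma shift_block_0:
  "matvec n M v 0 - a * v 0 = (cos_blk 0 - a) * v 0 + sin_blk 0 * v 1"
  "matvec n M v 1 - a * v 1 = - sin_blk 0 * v 0 + (cos_blk 0 - a) * v 1"
  using matvec_Amat_even[OF m_pos, of t c s v] matvec_Amat_odd[OF m_pos, of t c s v]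
  unfolding cos_blk_0 sin_blk_0 by (simp_all add: algebra_simps)

lemma shift_transp_block_0:
  "matvec n (transp M) v 0 - a * v 0 = (cos_blk 0 - a) * v 0 - sin_blk 0 * v 1"
  "matvec n (transp M) v 1 - a * v 1 = sin_blk 0 * v 0 + (cos_blk 0 - a) * v 1"
  using matvec_transp_Amat_even[OF m_pos, of t c s v] matvec_transp_Amat_odd[OF m_pos, of t c s v]
  unfolding cos_blk_0 sin_blk_0 by (simp_all add: algebra_simps)

lemma normalize_block_0: "normalize_n n u 0 = u 0 / norm_n n u" "normalize_n n u 1 = u 1 / norm_n n u"
  using m1 by (auto simp: normalize_n_def dimn_def)

text \<open>The Rayleigh quotient of a unit vector is the energy-weighted mean of the cosines.\<close>

lemma rayleigh_bounds:
  assumes "blocksum m t (energy v) = 1"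
  shows "cos_blk 0 \<le> inner_n n v (matvec n M v)"
    and "inner_n n v (matvec n M v) - cos_blk 0 \<le> (1 - cos_blk 0) * blocksum_tail m t (energy v)"
proof -
  have excess: "inner_n n v (matvec n M v) - cos_blk 0
      = blocksum_tail m t (\<lambda>k. (cos_blk k - cos_blk 0) * energy v k)"
  proof -
    have "inner_n n v (matvec n M v) - cos_blk 0
        = blocksum m t (\<lambda>k. cos_blk k * energy v k) - blocksum m t (\<lambda>k. cos_blk 0 * energy v k)"
      unfolding rayleigh_eq blocksum_mult assms by simp
    also have "\<dots> = blocksum m t (\<lambda>k. (cos_blk k - cos_blk 0) * energy v k)"
      by (simp add: blocksum_diff[symmetric] left_diff_distrib)
    finally show ?thesis using blocksum_split[OF m1] by simp
  qed
  have "0 \<le> blocksum_tail m t (\<lambda>k. (cos_blk k - cos_blk 0) * energy v k)"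
    by (rule blocksum_tail_nonneg[OF m1]) (auto simp: cos_blk_0_le energy_nonneg)
  then show "cos_blk 0 \<le> inner_n n v (matvec n M v)" using excess by simp
  show "inner_n n v (matvec n M v) - cos_blk 0 \<le> (1 - cos_blk 0) * blocksum_tail m t (energy v)"
    unfolding excess blocksum_tail_mult[symmetric]
    by (rule blocksum_tail_mono[OF m1], rule mult_right_mono) (auto simp: cos_blk_le_1 energy_nonneg)
qed

lemma normalized_shift:
  assumes v_unit: "blocksum m t (energy v) = 1" and v_0: "0 < energy v 0" and a: "0 \<le> a"
    and u: "\<And>k. is_block k \<Longrightarrow> energy u k = gain a k * energy v k"
  shows "(norm_n n u)\<^sup>2 = blocksum m t (\<lambda>k. gain a k * energy v k)"
    and "0 < norm_n n u"
    and "\<And>k. is_block k \<Longrightarrow> energy (normalize_n n u) k = gain a k * energy v k / (norm_n n u)\<^sup>2"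
    and "blocksum m t (energy (normalize_n n u)) = 1"
    and "0 < energy (normalize_n n u) 0"
    and "blocksum_tail m t (energy (normalize_n n u)) \<le> blocksum_tail m t (energy v)"
proof -
  define N where "N = norm_n n u"
  define T where "T = blocksum_tail m t (\<lambda>k. gain a k * energy v k)"
  show N_sq: "N\<^sup>2 = blocksum m t (\<lambda>k. gain a k * energy v k)"
    unfolding N_def norm_n_sq by (rule blocksum_cong) (simp add: u)
  have T_nonneg: "0 \<le> T"
    unfolding T_def by (rule blocksum_tail_nonneg[OF m1]) (simp add: gain_nonneg energy_nonneg)
  have head_pos: "0 < gain a 0 * energy v 0" using gain_0_pos v_0 by simp
  have N_sq_split: "N\<^sup>2 = gain a 0 * energy v 0 + T"
    unfolding N_sq T_def by (rule blocksum_split[OF m1])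
  hence N_sq_pos: "0 < N\<^sup>2" using head_pos T_nonneg by linarith
  then show N_pos: "0 < N" using norm_n_nonneg[of u] unfolding N_def by (simp add: less_le)
  show w: "\<And>k. is_block k \<Longrightarrow> energy (normalize_n n u) k = gain a k * energy v k / N\<^sup>2"
    unfolding N_def by (simp add: energy_normalize u)
  show "blocksum m t (energy (normalize_n n u)) = 1"
    using N_sq_pos by (simp add: w N_sq blocksum_divide cong: blocksum_cong)
  show "0 < energy (normalize_n n u) 0"
    using w[of 0] m_pos head_pos N_sq_pos by simp
  have "blocksum_tail m t (energy (normalize_n n u)) = T / N\<^sup>2"
    unfolding T_def blocksum_tail_divide[symmetric] by (rule blocksum_tail_cong[OF m1]) (simp add: w)
  moreover have "T \<le> blocksum_tail m t (energy v) * N\<^sup>2"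
  proof -
    have tail_v: "blocksum_tail m t (energy v) = 1 - energy v 0"
      using v_unit blocksum_split[OF m1, of t "energy v"] by simp
    have "T \<le> gain a 0 * blocksum_tail m t (energy v)"
      unfolding T_def blocksum_tail_mult[symmetric]
      by (rule blocksum_tail_mono[OF m1], rule mult_right_mono)
        (auto simp: gain_le_gain_0 a energy_nonneg)
    hence "energy v 0 * T \<le> energy v 0 * (gain a 0 * (1 - energy v 0))"
      using v_0 tail_v by (simp add: mult_left_mono)
    then show ?thesis unfolding N_sq_split tail_v by (simp add: algebra_simps)
  qed
  ultimately show "blocksum_tail m t (energy (normalize_n n u)) \<le> blocksum_tail m t (energy v)"
    using N_sq_pos by (simp add: divide_le_eq)
qed

text \<open>On block 0 the two half steps compose to the scaled rotation
  (transp G - \<beta>)(G - \<alpha>) = a I + b J, where J is the rotation by a right angle.\<close>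

lemma block_0_update:
  fixes \<alpha> \<beta> :: real and v :: "nat \<Rightarrow> real"
  defines "u \<equiv> \<lambda>i. matvec n M v i - \<alpha> * v i"
  defines "z \<equiv> \<lambda>i. matvec n (transp M) (normalize_n n u) i - \<beta> * normalize_n n u i"
  defines "a \<equiv> (cos_blk 0 - \<alpha>) * (cos_blk 0 - \<beta>) + (sin_blk 0)\<^sup>2"
    and "b \<equiv> sin_blk 0 * (\<alpha> - \<beta>)"
    and "K \<equiv> norm_n n u * norm_n n z"
  assumes "0 < norm_n n u" "0 < norm_n n z"
  shows "normalize_n n z 0 = (a * v 0 + b * v 1) / K"
    and "normalize_n n z 1 = (- b * v 0 + a * v 1) / K"
proof -
  define w where "w = normalize_n n u"
  have u_01: "u 0 = (cos_blk 0 - \<alpha>) * v 0 + sin_blk 0 * v 1"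
    "u 1 = - sin_blk 0 * v 0 + (cos_blk 0 - \<alpha>) * v 1"
    unfolding u_def by (rule shift_block_0)+
  have z_01: "z 0 = (cos_blk 0 - \<beta>) * w 0 - sin_blk 0 * w 1"
    "z 1 = sin_blk 0 * w 0 + (cos_blk 0 - \<beta>) * w 1"
    unfolding z_def w_def by (rule shift_transp_block_0)+
  show "normalize_n n z 0 = (a * v 0 + b * v 1) / K" "normalize_n n z 1 = (- b * v 0 + a * v 1) / K"
    using assms(6,7) unfolding normalize_block_0 z_01 w_def normalize_block_0 u_01 a_def b_def K_def
    by (simp_all add: field_simps power2_eq_square)
qed

lemma double_shift:
  fixes \<alpha> \<beta> :: real and v :: "nat \<Rightarrow> real"
  defines "u \<equiv> \<lambda>i. matvec n M v i - \<alpha> * v i"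
  defines "z \<equiv> \<lambda>i. matvec n (transp M) (normalize_n n u) i - \<beta> * normalize_n n u i"
  assumes v_unit: "blocksum m t (energy v) = 1" and v_0: "0 < energy v 0"
    and \<alpha>: "0 \<le> \<alpha>" and \<beta>: "0 \<le> \<beta>"
  shows "0 < norm_n n u" and "0 < norm_n n z"
    and "(norm_n n u * norm_n n z)\<^sup>2 = blocksum m t (\<lambda>k. gain \<beta> k * gain \<alpha> k * energy v k)"
    and "blocksum m t (energy (normalize_n n z)) = 1"
    and "0 < energy (normalize_n n z) 0"
proof -
  have "\<And>k. is_block k \<Longrightarrow> energy u k = gain \<alpha> k * energy v k"
    unfolding u_def by (rule energy_shift)
  note u = normalized_shift[OF v_unit v_0 \<alpha> this]
  have "\<And>k. is_block k \<Longrightarrow> energy z k = gain \<beta> k * energy (normalize_n n u) k"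
    unfolding z_def by (rule energy_shift_transp)
  note z = normalized_shift[OF u(4,5) \<beta> this]
  show "0 < norm_n n u" "0 < norm_n n z" "blocksum m t (energy (normalize_n n z)) = 1"
    "0 < energy (normalize_n n z) 0"
    using u z by simp_all
  have "(norm_n n z)\<^sup>2 = blocksum m t (\<lambda>k. gain \<beta> k * energy (normalize_n n u) k)"
    by (rule z(1))
  also have "\<dots> = blocksum m t (\<lambda>k. gain \<beta> k * (gain \<alpha> k * energy v k) / (norm_n n u)\<^sup>2)"
    by (rule blocksum_cong) (simp add: u(3))
  finally have "(norm_n n u * norm_n n z)\<^sup>2
      = (norm_n n u)\<^sup>2 * blocksum m t (\<lambda>k. gain \<beta> k * (gain \<alpha> k * energy v k) / (norm_n n u)\<^sup>2)"
    by (simp only: power_mult_distrib)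
  also have "\<dots> = blocksum m t (\<lambda>k. gain \<beta> k * gain \<alpha> k * energy v k)"
    using u(2) by (simp add: blocksum_divide mult.assoc)
  finally show "(norm_n n u * norm_n n z)\<^sup>2 = blocksum m t (\<lambda>k. gain \<beta> k * gain \<alpha> k * energy v k)" .
qed

lemma block_0_defect_le:
  fixes \<alpha> \<beta> :: real and v :: "nat \<Rightarrow> real"
  defines "u \<equiv> \<lambda>i. matvec n M v i - \<alpha> * v i"
  defines "z \<equiv> \<lambda>i. matvec n (transp M) (normalize_n n u) i - \<beta> * normalize_n n u i"
  assumes v_unit: "blocksum m t (energy v) = 1" and v_0: "0 < energy v 0"
    and \<alpha>: "cos_blk 0 \<le> \<alpha>" "\<alpha> - cos_blk 0 \<le> (1 - cos_blk 0) * blocksum_tail m t (energy v)"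
    and \<beta>: "cos_blk 0 \<le> \<beta>" "\<beta> - cos_blk 0 \<le> (1 - cos_blk 0) * blocksum_tail m t (energy v)"
  shows "(normalize_n n z 0 - v 0)\<^sup>2 + (normalize_n n z 1 - v 1)\<^sup>2 \<le> blocksum_tail m t (energy v)"
proof -
  define p where "p = energy v 0"
  define x where "x = blocksum_tail m t (energy v)"
  have x: "x = 1 - p" using v_unit blocksum_split[OF m1, of t "energy v"] unfolding p_def x_def by simp
  have x_nonneg: "0 \<le> x"
    unfolding x_def by (rule blocksum_tail_nonneg[OF m1]) (rule energy_nonneg)
  have p: "0 < p" "p \<le> 1" using v_0 x x_nonneg unfolding p_def by auto
  have x_le: "x \<le> 1" using x p by simp
  have p_eq: "p = (v 0)\<^sup>2 + (v 1)\<^sup>2" using m_pos unfolding p_def energy_def by simp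
  have \<alpha>\<beta>_nonneg: "0 \<le> \<alpha>" "0 \<le> \<beta>" using \<alpha>(1) \<beta>(1) cos_blk_0_pos by linarith+
  note norms = double_shift[OF v_unit v_0 \<alpha>\<beta>_nonneg, folded u_def, folded z_def]
  define a where "a = (cos_blk 0 - \<alpha>) * (cos_blk 0 - \<beta>) + (sin_blk 0)\<^sup>2"
  define b where "b = sin_blk 0 * (\<alpha> - \<beta>)"
  define K where "K = norm_n n u * norm_n n z"
  have K_pos: "0 < K" unfolding K_def using norms(1,2) by simp
  note update = block_0_update[where \<alpha>=\<alpha> and \<beta>=\<beta> and v=v, folded u_def, folded z_def a_def b_def K_def, OF norms(1,2)]
  have "(normalize_n n z 0 - v 0)\<^sup>2 + (normalize_n n z 1 - v 1)\<^sup>2 = p * ((a / K - 1)\<^sup>2 + (b / K)\<^sup>2)"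
    unfolding update p_eq using K_pos by (simp add: field_simps power2_eq_square)
  also have "\<dots> \<le> 1 - p"
  proof (rule scaled_rotation_defect_le[OF p _ K_pos])
    define T where "T = blocksum_tail m t (\<lambda>k. gain \<beta> k * gain \<alpha> k * energy v k)"
    have ab: "a\<^sup>2 + b\<^sup>2 = gain \<alpha> 0 * gain \<beta> 0"
      unfolding a_def b_def gain_def by (simp add: power2_eq_square algebra_simps)
    show "K\<^sup>2 = p * (a\<^sup>2 + b\<^sup>2) + T"
      unfolding K_def norms(3) ab T_def p_def by (simp add: blocksum_split[OF m1])
    show "0 \<le> T"
      unfolding T_def by (rule blocksum_tail_nonneg[OF m1]) (simp add: gain_nonneg energy_nonneg)
    show "T \<le> (a\<^sup>2 + b\<^sup>2) * (1 - p)"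
      unfolding ab T_def x[symmetric] x_def blocksum_tail_mult[symmetric]
    proof (rule blocksum_tail_mono[OF m1], rule mult_right_mono)
      fix k assume "is_block k"
      then show "gain \<beta> k * gain \<alpha> k \<le> gain \<alpha> 0 * gain \<beta> 0"
        using gain_le_gain_0 \<alpha>\<beta>_nonneg gain_nonneg by (simp add: mult_mono mult.commute)
    qed (rule energy_nonneg)
    have "(cos_blk 0)\<^sup>2 + (sin_blk 0)\<^sup>2 = 1" using cos_sin_blk_sq m_pos by simp
    note coeff = rotation_coeff_bounds[OF this cos_blk_0_pos x_nonneg x_le \<alpha>[folded x_def] \<beta>[folded x_def],
        folded a_def b_def]
    have "0 < (sin_blk 0)\<^sup>2" using sin_blk_0_nonzero by simp
    then show "0 < a" using coeff(1) by linarith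
    show "b\<^sup>2 \<le> (1 - p) * a\<^sup>2" using coeff(2) x by simp
  qed
  finally show ?thesis unfolding x[symmetric] x_def .
qed

lemma aci_step:
  fixes v0 :: "nat \<Rightarrow> real" and k :: nat
  defines "v \<equiv> aci_v n M v0 k" and "v' \<equiv> aci_v n M v0 (Suc k)"
  assumes v_unit: "blocksum m t (energy v) = 1" and v_0: "0 < energy v 0"
  shows "blocksum m t (energy v') = 1" and "0 < energy v' 0"
    and "(v' 0 - v 0)\<^sup>2 + (v' 1 - v 1)\<^sup>2 \<le> blocksum_tail m t (energy v)"
proof -
  define \<alpha> where "\<alpha> = inner_n n v (matvec n M v)"
  define u where "u = (\<lambda>i. matvec n M v i - \<alpha> * v i)"
  define \<beta> where "\<beta> = inner_n n (normalize_n n u) (matvec n M (normalize_n n u))"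
  define z where "z = (\<lambda>i. matvec n (transp M) (normalize_n n u) i - \<beta> * normalize_n n u i)"
  have v'_eq: "v' = normalize_n n z"
    unfolding v'_def z_def \<beta>_def u_def \<alpha>_def v_def by (simp add: Let_def)
  note \<alpha>_bounds = rayleigh_bounds[OF v_unit, folded \<alpha>_def]
  have \<alpha>_nonneg: "0 \<le> \<alpha>" using \<alpha>_bounds(1) cos_blk_0_pos by linarith
  have "\<And>k. is_block k \<Longrightarrow> energy u k = gain \<alpha> k * energy v k"
    unfolding u_def by (rule energy_shift)
  note w = normalized_shift[OF v_unit v_0 \<alpha>_nonneg this]
  note \<beta>_bounds = rayleigh_bounds[OF w(4), folded \<beta>_def]
  have \<beta>_nonneg: "0 \<le> \<beta>" using \<beta>_bounds(1) cos_blk_0_pos by linarith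
  have "(1 - cos_blk 0) * blocksum_tail m t (energy (normalize_n n u))
      \<le> (1 - cos_blk 0) * blocksum_tail m t (energy v)"
    using w(6) cos_blk_le_1[of 0] m_pos by (intro mult_left_mono) auto
  then have \<beta>_le: "\<beta> - cos_blk 0 \<le> (1 - cos_blk 0) * blocksum_tail m t (energy v)"
    using \<beta>_bounds(2) by linarith
  note norms = double_shift[where \<alpha>=\<alpha> and \<beta>=\<beta> and v=v, folded u_def, folded z_def,
      OF v_unit v_0 \<alpha>_nonneg \<beta>_nonneg]
  show "blocksum m t (energy v') = 1" "0 < energy v' 0"
    unfolding v'_eq using norms by simp_all
  show "(v' 0 - v 0)\<^sup>2 + (v' 1 - v 1)\<^sup>2 \<le> blocksum_tail m t (energy v)"
    unfolding v'_eq z_def u_def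
    by (rule block_0_defect_le[OF v_unit v_0 \<alpha>_bounds \<beta>_bounds(1) \<beta>_le])
qed

lemma aci_unit_block_0:
  assumes unit: "norm_n n v0 = 1" and b1: "blknorm m v0 1 \<noteq> 0"
  shows "blocksum m t (energy (aci_v n M v0 k)) = 1 \<and> 0 < energy (aci_v n M v0 k) 0"
proof (induction k)
  case 0
  have "blocksum m t (energy v0) = 1" using norm_n_sq[of v0] unit by simp
  moreover have "sqrt (energy v0 0) \<noteq> 0"
    using b1 blknorm_eq_sqrt_energy[of 0 v0] m_pos by simp
  then have "0 < energy v0 0" using energy_nonneg[of v0 0] by (simp add: less_le)
  ultimately show ?case by simp
next
  case (Suc k)
  then show ?case using aci_step(1,2) by blast
qed

lemma aci_energy_contraction:
  assumes rho: "0 \<le> \<rho>" and k: "k0 \<le> k" and j: "1 \<le> j" "is_block j"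
    and contr: "\<forall>k\<ge>k0. \<forall>j\<in>{2..(if t then m + 1 else m)}.
                 blknorm m (aci_v n M v0 (Suc k)) j \<le> \<rho> * blknorm m (aci_v n M v0 k) j"
  shows "energy (aci_v n M v0 (Suc k)) j \<le> \<rho>\<^sup>2 * energy (aci_v n M v0 k) j"
proof -
  have "Suc j \<in> {2..(if t then m + 1 else m)}" using j by auto
  then have "blknorm m (aci_v n M v0 (Suc k)) (Suc j) \<le> \<rho> * blknorm m (aci_v n M v0 k) (Suc j)"
    using contr k by blast
  then have "sqrt (energy (aci_v n M v0 (Suc k)) j) \<le> \<rho> * sqrt (energy (aci_v n M v0 k) j)"
    by (simp only: blknorm_eq_sqrt_energy[OF j(2)])
  then have "(sqrt (energy (aci_v n M v0 (Suc k)) j))\<^sup>2 \<le> (\<rho> * sqrt (energy (aci_v n M v0 k) j))\<^sup>2"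
    by (rule power_mono) (simp add: energy_nonneg del: aci_v.simps)
  then show ?thesis using energy_nonneg by (simp add: power_mult_distrib del: aci_v.simps)
qed

lemma aci_tail_decay:
  assumes rho: "0 \<le> \<rho>"
    and contr: "\<forall>k\<ge>k0. \<forall>j\<in>{2..(if t then m + 1 else m)}.
                 blknorm m (aci_v n M v0 (Suc k)) j \<le> \<rho> * blknorm m (aci_v n M v0 k) j"
  shows "blocksum_tail m t (energy (aci_v n M v0 (k0 + d)))
           \<le> (\<rho>\<^sup>2) ^ d * blocksum_tail m t (energy (aci_v n M v0 k0))"
proof (induction d)
  case (Suc d)
  have "blocksum_tail m t (energy (aci_v n M v0 (Suc (k0 + d))))
      \<le> blocksum_tail m t (\<lambda>j. \<rho>\<^sup>2 * energy (aci_v n M v0 (k0 + d)) j)"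
    by (rule blocksum_tail_mono[OF m1], rule aci_energy_contraction[OF rho _ _ _ contr]) auto
  also have "\<dots> \<le> \<rho>\<^sup>2 * ((\<rho>\<^sup>2) ^ d * blocksum_tail m t (energy (aci_v n M v0 k0)))"
    unfolding blocksum_tail_mult by (rule mult_left_mono[OF Suc]) simp
  finally show ?case by (simp del: aci_v.simps add: mult.assoc)
qed simp

end

theorem lemma4p7:
  fixes m :: nat and t :: bool and c s :: "nat \<Rightarrow> real"
    and v0 :: "nat \<Rightarrow> real" and k0 :: nat and \<rho> :: real
  assumes m1: "m \<ge> 1"
    and cs: "\<forall>j\<in>{1..m}. (c j)\<^sup>2 + (s j)\<^sup>2 = 1 \<and> s j \<noteq> 0"
    and c1: "0 < c 1"
    and cmono: "\<forall>j\<in>{1..<m}. c j < c (Suc j)"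
    and supp: "\<forall>i\<ge>dimn m t. v0 i = 0"
    and unit: "norm_n (dimn m t) v0 = 1"
    and gr: "grade (dimn m t) (Amat c s m t) v0 \<ge> 2"
    and b1: "blknorm m v0 1 \<noteq> 0"
    and rho: "0 < \<rho>" "\<rho> < 1"
    and contr: "\<forall>k\<ge>k0. \<forall>j\<in>{2..(if t then m + 1 else m)}.
                 blknorm m (aci_v (dimn m t) (Amat c s m t) v0 (Suc k)) j
                   \<le> \<rho> * blknorm m (aci_v (dimn m t) (Amat c s m t) v0 k) j"
  shows "\<forall>k\<ge>k0. blknorm m (\<lambda>i. aci_v (dimn m t) (Amat c s m t) v0 (Suc k) i
                                  - aci_v (dimn m t) (Amat c s m t) v0 k i) 1
                  \<le> \<rho> ^ (k - k0)"
proof (intro allI impI)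
  interpret rotation_blocks m t c s using m1 cs c1 cmono by unfold_locales
  let ?V = "aci_v n M v0"
  fix k assume "k0 \<le> k"
  then obtain d where k: "k = k0 + d" using le_Suc_ex by blast
  note inv = aci_unit_block_0[OF unit b1]
  have tail_k0: "blocksum_tail m t (energy (?V k0)) \<le> 1"
    using inv[of k0] blocksum_split[OF m1, of t "energy (?V k0)"] energy_nonneg[of "?V k0" 0] by linarith
  have "blknorm m (\<lambda>i. ?V (Suc k) i - ?V k i) 1 = sqrt ((?V (Suc k) 0 - ?V k 0)\<^sup>2 + (?V (Suc k) 1 - ?V k 1)\<^sup>2)"
    unfolding blknorm_def using m1 by simp
  also have "\<dots> \<le> sqrt (blocksum_tail m t (energy (?V k)))"
    using aci_step(3) inv by simp
  also have "\<dots> \<le> sqrt ((\<rho>\<^sup>2) ^ d)"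
  proof (rule real_sqrt_le_mono)
    have "blocksum_tail m t (energy (?V k)) \<le> (\<rho>\<^sup>2) ^ d * blocksum_tail m t (energy (?V k0))"
      unfolding k by (rule aci_tail_decay[OF less_imp_le[OF rho(1)] contr])
    also have "\<dots> \<le> (\<rho>\<^sup>2) ^ d" using tail_k0 by (simp add: mult_left_le)
    finally show "blocksum_tail m t (energy (?V k)) \<le> (\<rho>\<^sup>2) ^ d" .
  qed
  also have "(\<rho>\<^sup>2) ^ d = (\<rho> ^ d)\<^sup>2" by (simp only: power_mult[symmetric] mult.commute)
  also have "sqrt \<dots> = \<rho> ^ (k - k0)" using rho(1) unfolding k by simp
  finally show "blknorm m (\<lambda>i. ?V (Suc k) i - ?V k i) 1 \<le> \<rho> ^ (k - k0)" .
qed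

end
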